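(* Let $G$ be a simple connected graph with at least one edge. Then $H(G)=\bigcap_{\mathcal{F}\in\mathscr{F}}G(A_\mathcal{F})$, where all graphs $G(A_\mathcal{F})$ are regarded as graphs on the common vertex set $E(G)$ (the vertex corresponding to the column of edge $e$ being identified with $e$), and the intersection is taken over all path fixings $\mathcal{F}$ of $G$.
   Context: For distinct $u,v\in V(G)$, $\mathcal{P}_{uv}$ is the set of shortest $(u,v)$-paths in $G$ and $\mathcal{P}$ is the set of all such shortest paths. A path fixing of $G$ is a set $\mathcal{F}\subseteq\mathcal{P}$ with $|\mathcal{F}\cap\mathcal{P}_{uv}|=1$ for all distinct $u,v\in V(G)$; $\mathscr{F}$ is the set of all path fixings. For $\mathcal{F}\in\mathscr{F}$, $A_\mathcal{F}$ is the 0-1 matrix with rows indexed by the paths in $\mathcal{F}$ and columns indexed by $E(G)$, whose $(P,e)$ entry is 1 iff $e\in E(P)$. For a 0-1 matrix $A$ with columns $a_1,\dots,a_n$, $G(A)$ is the graph with one vertex per column, where distinct vertices $i,j$ are adjacent iff $a_i^{T}a_j\geq 1$. An edge $e$ separates distinct $u_1,u_2$ if $e$ lies on every path in $\mathcal{P}_{u_1u_2}$. The auxiliary graph $H(G)$ has vertex set $E(G)$, and distinct $e_1,e_2$ are adjacent in $H(G)$ iff some pair of distinct vertices is separated by both. The intersection of graphs has the intersection of the vertex sets and of the edge sets. *)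

theory Defs
  imports Main
begin

definition simple_graph :: "'a set \<Rightarrow> 'a set set \<Rightarrow> bool" where
  "simple_graph V E \<longleftrightarrow> finite V \<and> (\<forall>e\<in>E. \<exists>u v. u \<in> V \<and> v \<in> V \<and> u \<noteq> v \<and> e = {u, v})"

definition is_path :: "'a set \<Rightarrow> 'a set set \<Rightarrow> 'a list \<Rightarrow> 'a \<Rightarrow> 'a \<Rightarrow> bool" where
  "is_path V E xs u v \<longleftrightarrow> xs \<noteq> [] \<and> hd xs = u \<and> last xs = v \<and> distinct xs \<and> set xs \<subseteq> V
     \<and> (\<forall>i. Suc i < length xs \<longrightarrow> {xs ! i, xs ! Suc i} \<in> E)"

definition connected_graph :: "'a set \<Rightarrow> 'a set set \<Rightarrow> bool" where
  "connected_graph V E \<longleftrightarrow> (\<forall>u\<in>V. \<forall>v\<in>V. \<exists>xs. is_path V E xs u v)"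

text \<open>Edge set of a path (paths are identified with their edge sets, i.e. as subgraphs).\<close>
definition path_edges :: "'a list \<Rightarrow> 'a set set" where
  "path_edges xs = {{xs ! i, xs ! Suc i} | i. Suc i < length xs}"

definition is_shortest_path :: "'a set \<Rightarrow> 'a set set \<Rightarrow> 'a list \<Rightarrow> 'a \<Rightarrow> 'a \<Rightarrow> bool" where
  "is_shortest_path V E xs u v \<longleftrightarrow> is_path V E xs u v
     \<and> (\<forall>ys. is_path V E ys u v \<longrightarrow> length xs \<le> length ys)"

definition shortest_paths :: "'a set \<Rightarrow> 'a set set \<Rightarrow> 'a \<Rightarrow> 'a \<Rightarrow> 'a set set set" where
  "shortest_paths V E u v = path_edges ` {xs. is_shortest_path V E xs u v}"

definition all_shortest_paths :: "'a set \<Rightarrow> 'a set set \<Rightarrow> 'a set set set" where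
  "all_shortest_paths V E = (\<Union>u\<in>V. \<Union>v\<in>V. if u \<noteq> v then shortest_paths V E u v else {})"

definition path_fixings :: "'a set \<Rightarrow> 'a set set \<Rightarrow> 'a set set set set" where
  "path_fixings V E = {F. F \<subseteq> all_shortest_paths V E \<and>
     (\<forall>u\<in>V. \<forall>v\<in>V. u \<noteq> v \<longrightarrow> card (F \<inter> shortest_paths V E u v) = 1)}"

text \<open>The 0-1 matrix \<open>A_F\<close>: rows indexed by the paths in F, columns by E.\<close>
definition path_matrix :: "'a set set set \<Rightarrow> 'a set set \<Rightarrow> 'a set \<Rightarrow> nat" where
  "path_matrix F P e = (if e \<in> P then 1 else 0)"

type_synonym 'v graph = "'v set \<times> 'v set set"

definition col_graph :: "'r set \<Rightarrow> 'c set \<Rightarrow> ('r \<Rightarrow> 'c \<Rightarrow> nat) \<Rightarrow> 'c graph" where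
  "col_graph R C A = (C, {{i, j} | i j. i \<in> C \<and> j \<in> C \<and> i \<noteq> j \<and> (\<Sum>r\<in>R. A r i * A r j) \<ge> 1})"

definition separates :: "'a set \<Rightarrow> 'a set set \<Rightarrow> 'a set \<Rightarrow> 'a \<Rightarrow> 'a \<Rightarrow> bool" where
  "separates V E e u1 u2 \<longleftrightarrow> (\<forall>P\<in>shortest_paths V E u1 u2. e \<in> P)"

definition aux_graph :: "'a set \<Rightarrow> 'a set set \<Rightarrow> 'a set graph" where
  "aux_graph V E = (E, {{e1, e2} | e1 e2. e1 \<in> E \<and> e2 \<in> E \<and> e1 \<noteq> e2 \<and>
      (\<exists>u1\<in>V. \<exists>u2\<in>V. u1 \<noteq> u2 \<and> separates V E e1 u1 u2 \<and> separates V E e2 u1 u2)})"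

definition graph_Inter :: "'v graph set \<Rightarrow> 'v graph" where
  "graph_Inter S = (\<Inter> (fst ` S), \<Inter> (snd ` S))"

end

(*
  If a pair u, v is separated by both e1
  and e2, then the path that any fixing chooses for u, v contains both. Conversely, if no pair
  is separated by both, then every pair u, v has a shortest path avoiding e1 or e2; choosing
  such a path for each unordered pair gives a fixing in which e1 and e2 never share a path.
  That this choice is a path fixing rests on the fact that a shortest path, taken as a set of
  edges, determines its end vertices: they are the vertices lying on exactly one of its edges.
*)

theory Submission
  imports Defs
begin

lemma path_edges_rev [simp]: "path_edges (rev xs) = path_edges xs"
proof -
  have "path_edges (rev ys) \<subseteq> path_edges ys" for ys :: "'b list"
  proof
    fix e assume "e \<in> path_edges (rev ys)"
    then obtain i where i: "Suc i < length ys" "e = {rev ys ! i, rev ys ! Suc i}"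
      unfolding path_edges_def by auto
    define j where "j = length ys - Suc (Suc i)"
    have "Suc j < length ys" "e = {ys ! j, ys ! Suc j}"
      using i by (auto simp: j_def rev_nth Suc_diff_Suc insert_commute)
    then show "e \<in> path_edges ys" unfolding path_edges_def by blast
  qed
  from this[of xs] this[of "rev xs"] show ?thesis by auto
qed

lemma is_path_iff:
  "is_path V E xs u v \<longleftrightarrow> xs \<noteq> [] \<and> hd xs = u \<and> last xs = v \<and> distinct xs \<and> set xs \<subseteq> V
     \<and> path_edges xs \<subseteq> E"
  unfolding is_path_def path_edges_def by blast

lemma is_path_rev: "is_path V E xs u v \<Longrightarrow> is_path V E (rev xs) v u"
  by (simp add: is_path_iff hd_rev last_rev)

lemma is_shortest_path_rev: "is_shortest_path V E xs u v \<Longrightarrow> is_shortest_path V E (rev xs) v u"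
  unfolding is_shortest_path_def by (metis is_path_rev length_rev)

lemma shortest_paths_commute: "shortest_paths V E u v = shortest_paths V E v u"
proof -
  have "shortest_paths V E a b \<subseteq> shortest_paths V E b a" for a b
    unfolding shortest_paths_def
    by (auto intro!: image_eqI[where x = "rev _"] is_shortest_path_rev)
  then show ?thesis by blast
qed

lemma shortest_path_subset_edges: "P \<in> shortest_paths V E u v \<Longrightarrow> P \<subseteq> E"
  by (auto simp: shortest_paths_def is_shortest_path_def is_path_iff)

lemma shortest_paths_nonempty:
  assumes "connected_graph V E" "u \<in> V" "v \<in> V"
  shows "shortest_paths V E u v \<noteq> {}"
proof -
  obtain xs where "is_path V E xs u v"
    using assms unfolding connected_graph_def by blast
  then obtain ys where "is_path V E ys u v"
      and "\<And>zs. is_path V E zs u v \<Longrightarrow> length ys \<le> length zs"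
    using ex_has_least_nat[of "\<lambda>xs. is_path V E xs u v" xs length] by blast
  then show ?thesis unfolding shortest_paths_def is_shortest_path_def by blast
qed

definition end_vertices :: "'a set set \<Rightarrow> 'a set" where
  "end_vertices P = {x. \<exists>!e. e \<in> P \<and> x \<in> e}"

lemma nth_in_path_edge_iff:
  assumes "distinct xs" "Suc i < length xs" "k < length xs"
  shows "xs ! k \<in> {xs ! i, xs ! Suc i} \<longleftrightarrow> k = i \<or> k = Suc i"
  using assms by (auto simp: nth_eq_iff_index_eq)

lemma in_path_edgesE:
  assumes "e \<in> path_edges xs"
  obtains i where "Suc i < length xs" "e = {xs ! i, xs ! Suc i}"
  using assms unfolding path_edges_def by blast

lemma path_edgeI: "Suc i < length xs \<Longrightarrow> {xs ! i, xs ! Suc i} \<in> path_edges xs"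
  unfolding path_edges_def by blast

lemma hd_in_end_vertices:
  assumes "distinct xs" "2 \<le> length xs"
  shows "hd xs \<in> end_vertices (path_edges xs)"
proof -
  have "e = {xs ! 0, xs ! 1}" if e: "e \<in> path_edges xs" "xs ! 0 \<in> e" for e
  proof -
    obtain i where i: "Suc i < length xs" "e = {xs ! i, xs ! Suc i}"
      using e(1) by (rule in_path_edgesE)
    moreover have "0 < length xs"
      using i(1) by linarith
    ultimately have "i = 0"
      using e(2) nth_in_path_edge_iff[OF assms(1) i(1)] by blast
    with i show ?thesis by simp
  qed
  moreover have "{xs ! 0, xs ! 1} \<in> path_edges xs"
    using assms path_edgeI[of 0 xs] by simp
  moreover have "hd xs = xs ! 0"
    using assms by (intro hd_conv_nth) auto
  ultimately show ?thesis
    unfolding end_vertices_def by auto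
qed

lemma end_vertices_path_edges_subset:
  assumes "distinct xs"
  shows "end_vertices (path_edges xs) \<subseteq> {hd xs, last xs}"
proof
  fix x assume x: "x \<in> end_vertices (path_edges xs)"
  then obtain e where "e \<in> path_edges xs" "x \<in> e"
    unfolding end_vertices_def by blast
  then obtain k where k: "k < length xs" "x = xs ! k"
    by (elim in_path_edgesE) (auto dest: Suc_lessD)
  have "xs \<noteq> []"
    using k by auto
  consider "k = 0" | "k = length xs - 1" | "0 < k" "Suc k < length xs"
    using k by linarith
  then show "x \<in> {hd xs, last xs}"
  proof cases
    case 3
    then have "{xs ! (k - 1), xs ! k} \<in> path_edges xs" "{xs ! k, xs ! Suc k} \<in> path_edges xs"
              "{xs ! (k - 1), xs ! k} \<noteq> {xs ! k, xs ! Suc k}"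
      using path_edgeI[of "k - 1" xs] path_edgeI[of k xs] assms
      by (auto simp: nth_eq_iff_index_eq doubleton_eq_iff)
    with x k show ?thesis
      unfolding end_vertices_def by blast
  qed (use k \<open>xs \<noteq> []\<close> in \<open>auto simp: hd_conv_nth last_conv_nth\<close>)
qed

lemma end_vertices_path_edges:
  assumes "distinct xs" "2 \<le> length xs"
  shows "end_vertices (path_edges xs) = {hd xs, last xs}"
  using hd_in_end_vertices[OF assms] hd_in_end_vertices[of "rev xs"] assms
    end_vertices_path_edges_subset[OF assms(1)]
  by (auto simp: hd_rev)

lemma end_vertices_shortest_path:
  assumes "u \<noteq> v" "P \<in> shortest_paths V E u v"
  shows "end_vertices P = {u, v}"
proof -
  obtain xs where xs: "is_path V E xs u v" "P = path_edges xs"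
    using assms(2) unfolding shortest_paths_def is_shortest_path_def by auto
  then have "2 \<le> length xs"
    using assms(1) unfolding is_path_def
    by (cases xs rule: remdups_adj.cases) auto
  then show ?thesis
    using xs end_vertices_path_edges unfolding is_path_def by blast
qed

lemma shortest_paths_determine_ends:
  assumes "P \<in> shortest_paths V E u v" "P \<in> shortest_paths V E a b" "u \<noteq> v" "a \<noteq> b"
  shows "{a, b} = {u, v}"
  using end_vertices_shortest_path[OF assms(3,1)] end_vertices_shortest_path[OF assms(4,2)]
  by simp

lemma symmetric_choice_Int_shortest_paths:
  assumes f: "\<And>u v. u \<in> V \<Longrightarrow> v \<in> V \<Longrightarrow> u \<noteq> v \<Longrightarrow> f u v \<in> shortest_paths V E u v"
    and f_commute: "\<And>u v. f u v = f v u"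
    and uv: "u \<in> V" "v \<in> V" "u \<noteq> v"
  shows "{f a b | a b. a \<in> V \<and> b \<in> V \<and> a \<noteq> b} \<inter> shortest_paths V E u v = {f u v}"
proof (intro equalityI subsetI)
  fix P assume P: "P \<in> {f a b | a b. a \<in> V \<and> b \<in> V \<and> a \<noteq> b} \<inter> shortest_paths V E u v"
  then obtain a b where ab: "a \<in> V" "b \<in> V" "a \<noteq> b" "P = f a b"
    by blast
  have "P \<in> shortest_paths V E u v" "P \<in> shortest_paths V E a b"
    using P f ab by simp_all
  then have "{a, b} = {u, v}"
    using uv(3) ab(3) by (rule shortest_paths_determine_ends)
  with ab(4) f_commute show "P \<in> {f u v}"
    by (auto simp: doubleton_eq_iff)
qed (use uv f in blast)

lemma path_fixing_within:
  assumes Q_sub: "\<And>u v. u \<in> V \<Longrightarrow> v \<in> V \<Longrightarrow> u \<noteq> v \<Longrightarrow> Q u v \<subseteq> shortest_paths V E u v"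
    and Q_nonempty: "\<And>u v. u \<in> V \<Longrightarrow> v \<in> V \<Longrightarrow> u \<noteq> v \<Longrightarrow> Q u v \<noteq> {}"
    and Q_commute: "\<And>u v. Q u v = Q v u"
  shows "\<exists>F\<in>path_fixings V E. \<forall>u\<in>V. \<forall>v\<in>V. u \<noteq> v \<longrightarrow> F \<inter> shortest_paths V E u v \<subseteq> Q u v"
proof -
  define f where "f u v = (SOME P. P \<in> Q u v)" for u v
  have f_Q: "f u v \<in> Q u v" if "u \<in> V" "v \<in> V" "u \<noteq> v" for u v
    unfolding f_def using Q_nonempty[OF that] by (simp add: some_in_eq)
  have f_commute: "f u v = f v u" for u v
    unfolding f_def using Q_commute by simp
  have f_sp: "f u v \<in> shortest_paths V E u v" if "u \<in> V" "v \<in> V" "u \<noteq> v" for u v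
    using f_Q[OF that] Q_sub[OF that] by blast
  define F where "F = {f u v | u v. u \<in> V \<and> v \<in> V \<and> u \<noteq> v}"
  have F_Int: "F \<inter> shortest_paths V E u v = {f u v}" if "u \<in> V" "v \<in> V" "u \<noteq> v" for u v
    unfolding F_def using symmetric_choice_Int_shortest_paths[OF f_sp f_commute that] .
  have "F \<subseteq> all_shortest_paths V E"
    unfolding F_def all_shortest_paths_def using f_sp by fastforce
  with F_Int have "F \<in> path_fixings V E"
    unfolding path_fixings_def by simp
  moreover have "\<forall>u\<in>V. \<forall>v\<in>V. u \<noteq> v \<longrightarrow> F \<inter> shortest_paths V E u v \<subseteq> Q u v"
    using F_Int f_Q by simp
  ultimately show ?thesis
    by blast
qed

lemma path_fixings_nonempty:
  assumes "connected_graph V E"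
  shows "path_fixings V E \<noteq> {}"
  using path_fixing_within[OF subset_refl shortest_paths_nonempty[OF assms] shortest_paths_commute]
  by blast

lemma path_fixing_meets_shortest_paths:
  assumes "F \<in> path_fixings V E" "u \<in> V" "v \<in> V" "u \<noteq> v"
  obtains P where "P \<in> F" "P \<in> shortest_paths V E u v"
proof -
  have "card (F \<inter> shortest_paths V E u v) = 1"
    using assms unfolding path_fixings_def by blast
  then show ?thesis
    using that by (metis card_1_singletonE insertI1 IntE)
qed

lemma path_fixing_memberE:
  assumes "F \<in> path_fixings V E" "P \<in> F"
  obtains u v where "u \<in> V" "v \<in> V" "u \<noteq> v" "P \<in> shortest_paths V E u v"
  using assms unfolding path_fixings_def all_shortest_paths_def
  by (auto split: if_splits)

lemma finite_path_fixing:
  assumes "simple_graph V E" "F \<in> path_fixings V E"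
  shows "finite F"
proof -
  have "finite E"
    using assms(1) unfolding simple_graph_def
    by (auto intro: finite_subset[of E "Pow V"])
  moreover have "F \<subseteq> Pow E"
  proof
    fix P assume "P \<in> F"
    with assms(2) obtain u v where "P \<in> shortest_paths V E u v"
      by (elim path_fixing_memberE)
    then show "P \<in> Pow E"
      by (simp add: shortest_path_subset_edges)
  qed
  ultimately show ?thesis
    by (simp add: finite_subset)
qed

lemma all_path_fixings_share_path_iff_separates:
  assumes "connected_graph V E"
  shows "(\<forall>F\<in>path_fixings V E. \<exists>P\<in>F. e1 \<in> P \<and> e2 \<in> P) \<longleftrightarrow>
    (\<exists>u\<in>V. \<exists>v\<in>V. u \<noteq> v \<and> separates V E e1 u v \<and> separates V E e2 u v)"
proof
  assume shared: "\<forall>F\<in>path_fixings V E. \<exists>P\<in>F. e1 \<in> P \<and> e2 \<in> P"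
  show "\<exists>u\<in>V. \<exists>v\<in>V. u \<noteq> v \<and> separates V E e1 u v \<and> separates V E e2 u v"
  proof (rule ccontr)
    assume not_sep: "\<not> ?thesis"
    define Q where "Q u v = {P \<in> shortest_paths V E u v. \<not> (e1 \<in> P \<and> e2 \<in> P)}" for u v
    have Q_sub: "Q u v \<subseteq> shortest_paths V E u v" for u v
      unfolding Q_def by blast
    have Q_nonempty: "Q u v \<noteq> {}" if "u \<in> V" "v \<in> V" "u \<noteq> v" for u v
      using not_sep that unfolding Q_def separates_def by blast
    have Q_commute: "Q u v = Q v u" for u v
      unfolding Q_def by (simp add: shortest_paths_commute)
    obtain F where F: "F \<in> path_fixings V E"
      and F_Q: "\<forall>u\<in>V. \<forall>v\<in>V. u \<noteq> v \<longrightarrow> F \<inter> shortest_paths V E u v \<subseteq> Q u v"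
      using path_fixing_within[OF Q_sub Q_nonempty Q_commute] by blast
    obtain P where P: "P \<in> F" "e1 \<in> P" "e2 \<in> P"
      using shared F by blast
    obtain u v where "u \<in> V" "v \<in> V" "u \<noteq> v" "P \<in> shortest_paths V E u v"
      using F P(1) by (rule path_fixing_memberE)
    with F_Q P(1) have "P \<in> Q u v"
      by auto
    with P(2,3) show False
      unfolding Q_def by blast
  qed
next
  assume "\<exists>u\<in>V. \<exists>v\<in>V. u \<noteq> v \<and> separates V E e1 u v \<and> separates V E e2 u v"
  then obtain u v where uv: "u \<in> V" "v \<in> V" "u \<noteq> v"
    and sep: "separates V E e1 u v" "separates V E e2 u v"
    by blast
  show "\<forall>F\<in>path_fixings V E. \<exists>P\<in>F. e1 \<in> P \<and> e2 \<in> P"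
  proof
    fix F assume "F \<in> path_fixings V E"
    then obtain P where P: "P \<in> F" "P \<in> shortest_paths V E u v"
      using uv by (rule path_fixing_meets_shortest_paths)
    with sep have "e1 \<in> P" "e2 \<in> P"
      by (simp_all add: separates_def)
    with P(1) show "\<exists>P\<in>F. e1 \<in> P \<and> e2 \<in> P"
      by blast
  qed
qed

lemma INT_doubletons:
  assumes "S \<noteq> {}" and Q_commute: "\<And>s i j. Q s i j \<Longrightarrow> Q s j i"
  shows "(\<Inter>s\<in>S. {{i, j} | i j. R i j \<and> Q s i j}) = {{i, j} | i j. R i j \<and> (\<forall>s\<in>S. Q s i j)}"
proof (intro equalityI subsetI)
  fix x assume x: "x \<in> (\<Inter>s\<in>S. {{i, j} | i j. R i j \<and> Q s i j})"
  obtain s0 where "s0 \<in> S"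
    using assms(1) by blast
  with x obtain i j where ij: "x = {i, j}" "R i j"
    by blast
  have "Q s i j" if "s \<in> S" for s
  proof -
    obtain i' j' where "{i, j} = {i', j'}" "Q s i' j'"
      using x ij(1) \<open>s \<in> S\<close> by blast
    then show ?thesis
      by (auto simp: doubleton_eq_iff intro: Q_commute)
  qed
  with ij show "x \<in> {{i, j} | i j. R i j \<and> (\<forall>s\<in>S. Q s i j)}"
    by blast
qed blast

lemma col_graph_path_matrix:
  assumes "finite F"
  shows "col_graph F C (path_matrix F) =
    (C, {{i, j} | i j. i \<in> C \<and> j \<in> C \<and> i \<noteq> j \<and> (\<exists>P\<in>F. i \<in> P \<and> j \<in> P)})"
proof -
  have "1 \<le> (\<Sum>P\<in>F. path_matrix F P i * path_matrix F P j) \<longleftrightarrow> (\<exists>P\<in>F. i \<in> P \<and> j \<in> P)" for i j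
  proof -
    have "(\<Sum>P\<in>F. path_matrix F P i * path_matrix F P j) = 0 \<longleftrightarrow> \<not> (\<exists>P\<in>F. i \<in> P \<and> j \<in> P)"
      using assms by (simp add: sum_eq_0_iff path_matrix_def)
    then show ?thesis
      by linarith
  qed
  then show ?thesis
    unfolding col_graph_def by simp
qed

theorem proposition5:
  fixes V :: "'a set" and E :: "'a set set"
  assumes "simple_graph V E" and "connected_graph V E" and "E \<noteq> {}"
  shows "aux_graph V E =
    graph_Inter ((\<lambda>F. col_graph F E (path_matrix F)) ` path_fixings V E)"
proof -
  let ?shared = "\<lambda>F i j. \<exists>P\<in>F. i \<in> P \<and> j \<in> P"
  have fixings_nonempty: "path_fixings V E \<noteq> {}"
    using assms(2) by (rule path_fixings_nonempty)
  have "graph_Inter ((\<lambda>F. col_graph F E (path_matrix F)) ` path_fixings V E) =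
      (E, \<Inter>F\<in>path_fixings V E. {{i, j} | i j. (i \<in> E \<and> j \<in> E \<and> i \<noteq> j) \<and> ?shared F i j})"
    using fixings_nonempty finite_path_fixing[OF assms(1)]
    by (simp add: graph_Inter_def col_graph_path_matrix image_image conj_assoc cong: image_cong)
  also have "\<dots> = (E, {{i, j} | i j. (i \<in> E \<and> j \<in> E \<and> i \<noteq> j) \<and> (\<forall>F\<in>path_fixings V E. ?shared F i j)})"
    using fixings_nonempty by (subst INT_doubletons) auto
  also have "\<dots> = aux_graph V E"
    unfolding aux_graph_def all_path_fixings_share_path_iff_separates[OF assms(2)]
    by (simp add: conj_assoc)
  finally show ?thesis
    by (rule sym)
qed

end
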